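(* For every division ring $K$, every torsion-free group $G$ and every integer $n\ge2$, there are no $a,b\in K[G]$ with $\operatorname{rank}(a)=2$, $\operatorname{rank}(b)=n$ and $ab=1$.
   Context: $K[G]$ is the group ring; the rank of an element is the number of group elements with nonzero coefficient. A group is torsion-free if its only element of finite order is the identity. *)

theory Defs
  imports Main
begin

text \<open>The group G is a type of class group_add (written additively, not necessarily
  commutative). Elements of the group ring K[G] are finitely supported functions G => K.\<close>

definition gsupp :: "('g \<Rightarrow> 'k::zero) \<Rightarrow> 'g set" where
  "gsupp a = {g. a g \<noteq> 0}"

definition in_group_ring :: "('g \<Rightarrow> 'k::zero) \<Rightarrow> bool" where
  "in_group_ring a \<longleftrightarrow> finite (gsupp a)"

definition grank :: "('g \<Rightarrow> 'k::zero) \<Rightarrow> nat" where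
  "grank a = card (gsupp a)"

definition gr_mult :: "('g::group_add \<Rightarrow> 'k::ring) \<Rightarrow> ('g \<Rightarrow> 'k) \<Rightarrow> ('g \<Rightarrow> 'k)" where
  "gr_mult a b = (\<lambda>g. \<Sum>x\<in>gsupp a. a x * b (- x + g))"

definition gr_one :: "'g::group_add \<Rightarrow> 'k::ring_1" where
  "gr_one = (\<lambda>g. if g = 0 then 1 else 0)"

definition gpow :: "nat \<Rightarrow> 'g::group_add \<Rightarrow> 'g" where
  "gpow n g = ((\<lambda>x. g + x) ^^ n) 0"

definition torsion_free :: "'g::group_add itself \<Rightarrow> bool" where
  "torsion_free _ \<longleftrightarrow> (\<forall>(g::'g) n. n > 0 \<and> gpow n g = 0 \<longrightarrow> g = 0)"

end

theory Submission
  imports Defs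
begin

text \<open>Write \<open>a = \<alpha> x + \<beta> y\<close> and \<open>t = -y + x\<close>. Comparing coefficients of \<open>ab = 1\<close> at \<open>x + s\<close> gives
  \<open>\<alpha> b(s) + \<beta> b(t + s) = [s = -x]\<close>, so away from \<open>s = -x\<close> the coefficient \<open>b(s)\<close> vanishes exactly
  when \<open>b(t + s)\<close> does. At \<open>s = -x\<close> one of \<open>b(-x)\<close>, \<open>b(t - x)\<close> is nonzero; following the
  translates by \<open>-t\<close> from the first, or by \<open>t\<close> from the second, never returns to the exceptional
  point because \<open>t\<close> has infinite order, so the support of \<open>b\<close> would be infinite.\<close>

lemma gpow_0 [simp]: "gpow 0 g = 0"
  by (simp add: gpow_def)

lemma gpow_Suc: "gpow (Suc k) g = g + gpow k g"
  by (simp add: gpow_def)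

lemma gpow_add: "gpow (i + j) g = gpow i g + gpow j g"
  by (induction i) (simp_all add: gpow_Suc add.assoc)

lemma torsion_free_gpow_eq_0_iff:
  assumes "torsion_free TYPE('g::group_add)"
  shows "gpow k (u::'g) = 0 \<longleftrightarrow> k = 0 \<or> u = 0"
proof -
  have "gpow k 0 = (0::'g)" by (induction k) (simp_all add: gpow_Suc)
  then show ?thesis using assms unfolding torsion_free_def by auto
qed

lemma torsion_free_inj_gpow:
  assumes "torsion_free TYPE('g::group_add)" and "(u::'g) \<noteq> 0"
  shows "inj (\<lambda>k. gpow k u)"
proof -
  have "gpow i u \<noteq> gpow j u" if "i < j" for i j
  proof
    assume "gpow i u = gpow j u"
    moreover have "gpow j u = gpow (j - i) u + gpow i u"
      using that by (simp add: gpow_add[symmetric])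
    ultimately have "gpow (j - i) u + gpow i u = 0 + gpow i u" by simp
    then have "gpow (j - i) u = 0" by (simp only: add_right_cancel)
    then show False using that assms by (simp add: torsion_free_gpow_eq_0_iff)
  qed
  then show ?thesis by (metis injI linorder_neqE_nat)
qed

lemma torsion_free_infinite_if_translation_closed:
  fixes S :: "'g::group_add set"
  assumes "torsion_free TYPE('g)" and "u \<noteq> 0" and "p \<in> S"
    and closed: "\<And>s. s \<in> S \<Longrightarrow> s \<noteq> -u + p \<Longrightarrow> u + s \<in> S"
  shows "infinite S"
proof
  assume "finite S"
  have orbit: "gpow k u + p \<in> S" for k
  proof (induction k)
    case 0
    then show ?case using \<open>p \<in> S\<close> by simp
  next
    case (Suc k)
    have "gpow k u + p \<noteq> -u + p"
    proof
      assume "gpow k u + p = -u + p"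
      then have "u + gpow k u = 0" by (simp add: add_right_cancel minus_unique)
      then show False using assms(1,2) by (simp add: gpow_Suc[symmetric] torsion_free_gpow_eq_0_iff)
    qed
    then show ?case using closed[OF Suc] by (simp add: gpow_Suc add.assoc)
  qed
  have "inj (\<lambda>k. gpow k u + p)"
    using torsion_free_inj_gpow[OF assms(1,2)] by (simp add: inj_def)
  then have "infinite (range (\<lambda>k. gpow k u + p))"
    using finite_imageD by blast
  with orbit \<open>finite S\<close> show False by (meson finite_subset image_subsetI)
qed

lemma gr_mult_apply_rank2:
  assumes "gsupp a = {x, y}" and "x \<noteq> y"
  shows "gr_mult a b (x + s) = a x * b s + a y * b ((-y + x) + s)"
  using assms unfolding gr_mult_def by (simp add: add.assoc)

lemma gr_one_translate: "gr_one (x + s) = (if s = -x then 1 else 0)"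
  unfolding gr_one_def by (metis add.left_inverse add_minus_cancel minus_unique)

lemma add_mult_eq_0_nonzero_iff:
  fixes \<alpha> \<beta> b c :: "'k::division_ring"
  assumes "\<alpha> \<noteq> 0" and "\<beta> \<noteq> 0" and "\<alpha> * b + \<beta> * c = 0"
  shows "b \<noteq> 0 \<longleftrightarrow> c \<noteq> 0"
  using assms by (metis add.left_neutral add.right_neutral mult_eq_0_iff)

lemma torsion_free_rank2_not_left_invertible:
  fixes a b :: "'g::group_add \<Rightarrow> 'k::division_ring"
  assumes "torsion_free TYPE('g)" and "grank a = 2" and "in_group_ring b"
  shows "gr_mult a b \<noteq> gr_one"
proof
  assume ab: "gr_mult a b = gr_one"
  obtain x y where xy: "gsupp a = {x, y}" "x \<noteq> y"
    using assms(2) unfolding grank_def by (metis card_2_iff)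
  then have "a x \<noteq> 0" "a y \<noteq> 0" unfolding gsupp_def by blast+
  define t where "t = -y + x"
  have "t \<noteq> 0" unfolding t_def using xy(2) by (metis add.left_inverse add_left_cancel)
  have coeff: "a x * b s + a y * b (t + s) = (if s = -x then 1 else 0)" for s
    using fun_cong[OF ab, of "x + s"] unfolding t_def gr_mult_apply_rank2[OF xy] gr_one_translate .
  have shift: "s \<in> gsupp b \<longleftrightarrow> t + s \<in> gsupp b" if "s \<noteq> -x" for s
    using add_mult_eq_0_nonzero_iff[OF \<open>a x \<noteq> 0\<close> \<open>a y \<noteq> 0\<close>] coeff[of s] that
    unfolding gsupp_def by simp
  have "-x \<in> gsupp b \<or> t + -x \<in> gsupp b"
    using coeff[of "-x"] unfolding gsupp_def by auto
  then have "infinite (gsupp b)"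
  proof
    assume "-x \<in> gsupp b"
    show ?thesis
    proof (rule torsion_free_infinite_if_translation_closed[OF assms(1) _ \<open>-x \<in> gsupp b\<close>])
      show "-t \<noteq> 0" using \<open>t \<noteq> 0\<close> by simp
      fix s assume "s \<in> gsupp b" "s \<noteq> - (- t) + - x"
      then have "-t + s \<noteq> -x" by (metis add_minus_cancel minus_minus)
      then show "-t + s \<in> gsupp b" using shift \<open>s \<in> gsupp b\<close> by (simp add: add.assoc[symmetric])
    qed
  next
    assume "t + -x \<in> gsupp b"
    moreover have "-t + (t + -x) = -x" by (rule minus_add_cancel)
    ultimately show ?thesis
      using torsion_free_infinite_if_translation_closed[OF assms(1) \<open>t \<noteq> 0\<close>] shift by metis
  qed
  with assms(3) show False unfolding in_group_ring_def by blast
qed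

theorem theorem6p2:
  fixes a b :: "'g::group_add \<Rightarrow> 'k::division_ring" and n :: nat
  assumes "torsion_free TYPE('g)" and "n \<ge> 2"
  shows "\<not> (in_group_ring a \<and> in_group_ring b \<and> grank a = 2 \<and> grank b = n
            \<and> gr_mult a b = gr_one)"
  using torsion_free_rank2_not_left_invertible[OF assms(1)] by blast

end
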